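(* Let $i\in\{1,\dots,N\}$, $\mathbb I\subset\{i-2K,\dots,i+2K\}$ and $k,l\notin\mathbb I$. Then $|G^{(\mathbb I)}_{kl}|\le 8K^2\Gamma^2\gamma$.
   Context: $K\ge1$ is an integer. $H$ is an $N\times N$ real symmetric matrix, $z\in\mathbb C^+$, $G=(H-z)^{-1}$. For $\mathbb T\subset\{1,\dots,N\}$, $H^{(\mathbb T)}$ has entries $H_{ij}\mathbf 1_{i\notin\mathbb T}\mathbf 1_{j\notin\mathbb T}$ and $G^{(\mathbb T)}=(H^{(\mathbb T)}-z)^{-1}$; $A_{\mathbb S,\mathbb U}$ denotes a submatrix. Control parameters: $\Gamma=1\vee\max_{i,j}|G_{ij}|$ and $\gamma=1\vee\sup_i\sup_{\mathbb I,\mathbb J}\|(G^{(\mathbb J)}_{\mathbb I,\mathbb I})^{-1}\|$, where the inner supremum is over all disjoint $\mathbb I,\mathbb J\subset\{i-2K,\dots,i+2K\}$ and $\|\cdot\|$ is the operator norm. *)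

theory Defs
  imports "HOL-Analysis.Analysis"
begin

text \<open>Matrices are functions nat => nat => complex; only the entries indexed by a
finite index set S are meaningful. The N x N matrices of the paper use S = {1..N}.\<close>

definition minv :: "nat set \<Rightarrow> (nat \<Rightarrow> nat \<Rightarrow> complex) \<Rightarrow> (nat \<Rightarrow> nat \<Rightarrow> complex)" where
  "minv S A = (THE B. (\<forall>i\<in>S. \<forall>j\<in>S. (\<Sum>k\<in>S. A i k * B k j) = (if i = j then 1 else 0))
                    \<and> (\<forall>i j. i \<notin> S \<or> j \<notin> S \<longrightarrow> B i j = 0))"

definition opnorm :: "nat set \<Rightarrow> (nat \<Rightarrow> nat \<Rightarrow> complex) \<Rightarrow> real" where
  "opnorm S A = Sup (insert 0 {sqrt (\<Sum>i\<in>S. (cmod (\<Sum>j\<in>S. A i j * v j))\<^sup>2) | v.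
                     (\<Sum>j\<in>S. (cmod (v j))\<^sup>2) = 1})"

definition minor :: "(nat \<Rightarrow> nat \<Rightarrow> real) \<Rightarrow> nat set \<Rightarrow> (nat \<Rightarrow> nat \<Rightarrow> real)" where
  "minor H T = (\<lambda>i j. if i \<notin> T \<and> j \<notin> T then H i j else 0)"

definition resolv :: "nat \<Rightarrow> (nat \<Rightarrow> nat \<Rightarrow> real) \<Rightarrow> complex \<Rightarrow> nat set \<Rightarrow> (nat \<Rightarrow> nat \<Rightarrow> complex)" where
  "resolv N H z T = minv {1..N} (\<lambda>i j. complex_of_real (minor H T i j) - (if i = j then z else 0))"

definition window :: "nat \<Rightarrow> nat \<Rightarrow> nat \<Rightarrow> nat set" where
  "window N K i = {j \<in> {1..N}. i \<le> j + 2 * K \<and> j \<le> i + 2 * K}"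

definition Gamma_ctrl :: "nat \<Rightarrow> (nat \<Rightarrow> nat \<Rightarrow> real) \<Rightarrow> complex \<Rightarrow> real" where
  "Gamma_ctrl N H z = max 1 (Max {cmod (resolv N H z {} i j) | i j. i \<in> {1..N} \<and> j \<in> {1..N}})"

definition gamma_ctrl :: "nat \<Rightarrow> nat \<Rightarrow> (nat \<Rightarrow> nat \<Rightarrow> real) \<Rightarrow> complex \<Rightarrow> real" where
  "gamma_ctrl N K H z = max 1 (Sup {opnorm I (minv I (resolv N H z J)) | i I J.
       i \<in> {1..N} \<and> I \<subseteq> window N K i \<and> J \<subseteq> window N K i \<and> I \<inter> J = {}})"

end

theory Submission
  imports Defs "Jordan_Normal_Form.Determinant"
begin

(*
  Deleting the rows and columns in I is a Schur complement. With M = H - z, G = M^-1 and T the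
  complement of I, the resolvent G^(I) restricted to T is (M_TT)^-1 = G_TT - G_TI (G_II)^-1 G_IT,
  so G^(I)_kl = G_kl - sum_{x,y in I} G_kx ((G_II)^-1)_xy G_yl. The row and column of G have
  l2-norm at most sqrt |I| * Gamma on I, and (G_II)^-1 has norm at most gamma, whence
  |G^(I)_kl| <= Gamma + |I| Gamma^2 gamma <= (4K + 2) Gamma^2 gamma <= 8 K^2 Gamma^2 gamma.
  All inverses exist since Im <w, (H^(J) - z) w> = - Im z |w|^2, so the form of H^(J) - z
  has no isotropic vectors.
*)

definition mat_mult_on ::
    "nat set \<Rightarrow> (nat \<Rightarrow> nat \<Rightarrow> 'a::comm_semiring_0) \<Rightarrow> (nat \<Rightarrow> nat \<Rightarrow> 'a) \<Rightarrow> nat \<Rightarrow> nat \<Rightarrow> 'a" where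
  "mat_mult_on S A B a c = (\<Sum>k\<in>S. A a k * B k c)"

definition right_inverse_on :: "nat set \<Rightarrow> (nat \<Rightarrow> nat \<Rightarrow> 'a::comm_semiring_1) \<Rightarrow> (nat \<Rightarrow> nat \<Rightarrow> 'a) \<Rightarrow> bool" where
  "right_inverse_on S A B \<longleftrightarrow> (\<forall>a\<in>S. \<forall>c\<in>S. mat_mult_on S A B a c = of_bool (a = c))"

lemma mat_mult_on_assoc:
  "mat_mult_on S (mat_mult_on T A B) C = mat_mult_on T A (mat_mult_on S B C)"
  by (intro ext) (simp add: mat_mult_on_def sum_distrib_left sum_distrib_right mult.assoc, rule sum.swap)

lemma mat_mult_on_id_left:
  fixes B :: "nat \<Rightarrow> nat \<Rightarrow> 'a::comm_semiring_1"
  assumes "finite S" "a \<in> S" shows "mat_mult_on S (\<lambda>a c. of_bool (a = c)) B a c = B a c"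
proof -
  have "mat_mult_on S (\<lambda>a c. of_bool (a = c)) B a c = (\<Sum>k\<in>S. if a = k then B k c else 0)"
    unfolding mat_mult_on_def by (intro sum.cong) auto
  then show ?thesis using assms by simp
qed

lemma mat_mult_on_id_right:
  fixes A :: "nat \<Rightarrow> nat \<Rightarrow> 'a::comm_semiring_1"
  assumes "finite S" "c \<in> S" shows "mat_mult_on S A (\<lambda>a c. of_bool (a = c)) a c = A a c"
proof -
  have "mat_mult_on S A (\<lambda>a c. of_bool (a = c)) a c = (\<Sum>k\<in>S. if k = c then A a k else 0)"
    unfolding mat_mult_on_def by (intro sum.cong) auto
  then show ?thesis using assms by simp
qed

lemma mat_mult_on_cong:
  "(\<And>k. k \<in> S \<Longrightarrow> A a k = A' a k) \<Longrightarrow> (\<And>k. k \<in> S \<Longrightarrow> B k c = B' k c)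
    \<Longrightarrow> mat_mult_on S A B a c = mat_mult_on S A' B' a c"
  unfolding mat_mult_on_def by (intro sum.cong) auto

lemma mat_mult_on_split:
  "finite S \<Longrightarrow> I \<subseteq> S \<Longrightarrow> mat_mult_on S A B a c = mat_mult_on (S - I) A B a c + mat_mult_on I A B a c"
  unfolding mat_mult_on_def by (rule sum.subset_diff)

lemma right_inverse_on_unique:
  fixes A :: "nat \<Rightarrow> nat \<Rightarrow> 'a::comm_semiring_1"
  assumes S: "finite S" and LA: "right_inverse_on S L A" and AB: "right_inverse_on S A B"
    and a: "a \<in> S" and c: "c \<in> S"
  shows "L a c = B a c"
proof -
  have "L a c = mat_mult_on S L (\<lambda>a c. of_bool (a = c)) a c"
    by (rule mat_mult_on_id_right[OF S c, symmetric])
  also have "\<dots> = mat_mult_on S L (mat_mult_on S A B) a c"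
    using AB c by (intro mat_mult_on_cong) (auto simp: right_inverse_on_def)
  also have "\<dots> = mat_mult_on S (mat_mult_on S L A) B a c"
    by (simp add: mat_mult_on_assoc)
  also have "\<dots> = mat_mult_on S (\<lambda>a c. of_bool (a = c)) B a c"
    using LA a by (intro mat_mult_on_cong) (auto simp: right_inverse_on_def)
  also have "\<dots> = B a c"
    by (rule mat_mult_on_id_left[OF S a])
  finally show ?thesis .
qed

definition mat_inj_on :: "nat set \<Rightarrow> (nat \<Rightarrow> nat \<Rightarrow> 'a::comm_semiring_0) \<Rightarrow> bool" where
  "mat_inj_on S A \<longleftrightarrow> (\<forall>v. (\<forall>i\<in>S. (\<Sum>j\<in>S. A i j * v j) = 0) \<longrightarrow> (\<forall>j\<in>S. v j = 0))"

lemma mat_inj_on_det_neq_0: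
  fixes A :: "nat \<Rightarrow> nat \<Rightarrow> 'a::field"
  assumes e: "bij_betw e {0..<n} S" and inj: "mat_inj_on S A"
  shows "det (mat n n (\<lambda>(i, j). A (e i) (e j))) \<noteq> 0"
proof
  let ?A = "mat n n (\<lambda>(i, j). A (e i) (e j))"
  assume "det ?A = 0"
  then obtain v where v: "v \<in> carrier_vec n" "v \<noteq> 0\<^sub>v n" "?A *\<^sub>v v = 0\<^sub>v n"
    using det_0_iff_vec_prod_zero_field[of ?A n] by auto
  define w where "w = (\<lambda>x. v $ the_inv_into {0..<n} e x)"
  have we: "w (e j) = v $ j" if "j < n" for j
    using e that by (simp add: w_def bij_betw_def the_inv_into_f_f)
  have "(\<Sum>j\<in>S. A i j * w j) = 0" if "i \<in> S" for i
  proof -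
    obtain m where m: "m < n" "i = e m" using e \<open>i \<in> S\<close> by (auto simp: bij_betw_def)
    have "(\<Sum>j\<in>S. A i j * w j) = (\<Sum>j = 0..<n. A (e m) (e j) * v $ j)"
      using sum.reindex_bij_betw[OF e, of "\<lambda>j. A i j * w j"] m we by simp
    also have "\<dots> = (?A *\<^sub>v v) $ m" using v(1) m by (simp add: scalar_prod_def)
    finally show ?thesis using v(3) m by simp
  qed
  then have "\<forall>j\<in>S. w j = 0" using inj by (auto simp: mat_inj_on_def)
  then have "v = 0\<^sub>v n"
    using v(1) e we by (intro eq_vecI) (auto simp: bij_betw_def)
  with v(2) show False ..
qed

lemma right_inverse_on_exists:
  fixes A :: "nat \<Rightarrow> nat \<Rightarrow> 'a::field"
  assumes S: "finite S" and inj: "mat_inj_on S A"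
  shows "\<exists>B. right_inverse_on S A B \<and> right_inverse_on S B A"
proof -
  define n where "n = card S"
  obtain e where e: "bij_betw e {0..<n} S" using ex_bij_betw_nat_finite[OF S] n_def by blast
  define f where "f = the_inv_into {0..<n} e"
  have f: "f x < n" "e (f x) = x" if "x \<in> S" for x
    using e that unfolding f_def bij_betw_def
    by (metis atLeastLessThan_iff the_inv_into_into order_refl, simp add: f_the_inv_into_f)
  have fe: "f (e i) = i" if "i < n" for i
    using e that unfolding f_def by (simp add: bij_betw_def the_inv_into_f_f)
  define Am where "Am = mat n n (\<lambda>(i, j). A (e i) (e j))"
  have Am: "Am \<in> carrier_mat n n" by (simp add: Am_def)
  obtain Bm where Bm: "Bm \<in> carrier_mat n n" and BA: "Bm * Am = 1\<^sub>m n"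
    using det_non_zero_imp_unit[OF Am mat_inj_on_det_neq_0[OF e inj, folded Am_def],
        of undefined]
    unfolding Units_def ring_mat_def by auto
  have AB: "Am * Bm = 1\<^sub>m n" by (rule mat_mult_left_right_inverse[OF Bm Am BA])
  define B where "B = (\<lambda>x y. Bm $$ (f x, f y))"
  have reindex: "mat_mult_on S X Y a c = (\<Sum>k = 0..<n. X a (e k) * Y (e k) c)" for X Y a c
    unfolding mat_mult_on_def by (rule sum.reindex_bij_betw[OF e, symmetric])
  have "mat_mult_on S A B a c = (Am * Bm) $$ (f a, f c)"
    and "mat_mult_on S B A a c = (Bm * Am) $$ (f a, f c)" if "a \<in> S" "c \<in> S" for a c
    using that Bm f fe by (auto simp: reindex Am_def B_def scalar_prod_def intro!: sum.cong)
  moreover have "inj_on f S" by (metis f(2) inj_onI)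
  ultimately show ?thesis
    using f by (intro exI[of _ B]) (auto simp: right_inverse_on_def AB BA inj_on_eq_iff)
qed

lemma minv_eqI:
  assumes S: "finite S" and AB: "right_inverse_on S A B" and BA: "right_inverse_on S B A"
  shows "minv S A = (\<lambda>a c. if a \<in> S \<and> c \<in> S then B a c else 0)"
  unfolding minv_def
proof (rule the1_equality)
  let ?B = "\<lambda>a c. if a \<in> S \<and> c \<in> S then B a c else 0"
  have inverse_iff: "(\<forall>a\<in>S. \<forall>c\<in>S. (\<Sum>k\<in>S. A a k * X k c) = (if a = c then 1 else 0))
      \<longleftrightarrow> right_inverse_on S A X" for X
    by (simp add: right_inverse_on_def mat_mult_on_def of_bool_def)
  have B: "right_inverse_on S A ?B \<and> (\<forall>a c. a \<notin> S \<or> c \<notin> S \<longrightarrow> ?B a c = 0)"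
    using AB by (simp add: right_inverse_on_def mat_mult_on_def cong: sum.cong)
  have unique: "X = ?B" if "right_inverse_on S A X \<and> (\<forall>a c. a \<notin> S \<or> c \<notin> S \<longrightarrow> X a c = 0)"
    for X using that right_inverse_on_unique[OF S BA] by (fastforce intro!: ext)
  show "(\<forall>a\<in>S. \<forall>c\<in>S. (\<Sum>k\<in>S. A a k * ?B k c) = (if a = c then 1 else 0))
      \<and> (\<forall>a c. a \<notin> S \<or> c \<notin> S \<longrightarrow> ?B a c = 0)"
    unfolding inverse_iff by (rule B)
  show "\<exists>!X. (\<forall>a\<in>S. \<forall>c\<in>S. (\<Sum>k\<in>S. A a k * X k c) = (if a = c then 1 else 0))
      \<and> (\<forall>a c. a \<notin> S \<or> c \<notin> S \<longrightarrow> X a c = 0)"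
    unfolding inverse_iff using B unique by blast
qed

lemma minv_right_inverse_on:
  fixes A :: "nat \<Rightarrow> nat \<Rightarrow> complex"
  assumes S: "finite S" and inj: "mat_inj_on S A"
  shows "right_inverse_on S A (minv S A)" "right_inverse_on S (minv S A) A"
proof -
  obtain B where AB: "right_inverse_on S A B" and BA: "right_inverse_on S B A"
    using right_inverse_on_exists[OF S inj] by blast
  show "right_inverse_on S A (minv S A)" "right_inverse_on S (minv S A) A"
    using AB BA by (simp_all add: minv_eqI[OF S AB BA] right_inverse_on_def mat_mult_on_def
        cong: sum.cong)
qed

lemma opnorm_L2_set:
  "opnorm S A = Sup (insert 0 {L2_set (\<lambda>i. cmod (\<Sum>j\<in>S. A i j * v j)) S | v. L2_set (\<lambda>j. cmod (v j)) S = 1})"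
  unfolding opnorm_def L2_set_def by simp

lemma opnorm_bdd_above:
  fixes A :: "nat \<Rightarrow> nat \<Rightarrow> complex"
  assumes S: "finite S"
  shows "bdd_above (insert 0 {L2_set (\<lambda>i. cmod (\<Sum>j\<in>S. A i j * v j)) S | v. L2_set (\<lambda>j. cmod (v j)) S = 1})"
proof (rule bdd_aboveI, safe)
  fix v :: "nat \<Rightarrow> complex" assume v: "L2_set (\<lambda>j. cmod (v j)) S = 1"
  have "cmod (v j) \<le> 1" if "j \<in> S" for j
    using member_le_L2_set[OF S that, of "\<lambda>j. cmod (v j)"] v by simp
  then have "cmod (\<Sum>j\<in>S. A i j * v j) \<le> (\<Sum>j\<in>S. cmod (A i j))" for i
    by (intro order.trans[OF norm_sum] sum_mono) (auto simp: norm_mult intro: mult_left_le)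
  then show "L2_set (\<lambda>i. cmod (\<Sum>j\<in>S. A i j * v j)) S \<le> L2_set (\<lambda>i. \<Sum>j\<in>S. cmod (A i j)) S"
    by (intro L2_set_mono) auto
qed simp

lemma opnorm_nonneg: "finite S \<Longrightarrow> 0 \<le> opnorm S A"
  unfolding opnorm_L2_set by (rule cSup_upper[OF _ opnorm_bdd_above]) auto

lemma L2_set_mat_vec_le_opnorm:
  assumes S: "finite S"
  shows "L2_set (\<lambda>i. cmod (\<Sum>j\<in>S. A i j * v j)) S \<le> opnorm S A * L2_set (\<lambda>j. cmod (v j)) S"
proof (cases "L2_set (\<lambda>j. cmod (v j)) S = 0")
  case True
  then show ?thesis using S by (simp add: L2_set_eq_0_iff L2_set_0')
next
  case False
  define s where "s = L2_set (\<lambda>j. cmod (v j)) S"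
  have s: "0 < s" using False L2_set_nonneg unfolding s_def by (metis order_le_neq_trans)
  define u where "u j = of_real (inverse s) * v j" for j
  have "L2_set (\<lambda>j. cmod (u j)) S = L2_set (\<lambda>j. inverse s * cmod (v j)) S"
    using s by (intro L2_set_cong) (auto simp: u_def norm_mult norm_inverse)
  also have "\<dots> = 1"
    using s by (simp flip: L2_set_right_distrib add: s_def)
  finally have "L2_set (\<lambda>j. cmod (u j)) S = 1" .
  then have "L2_set (\<lambda>i. cmod (\<Sum>j\<in>S. A i j * u j)) S \<le> opnorm S A"
    unfolding opnorm_L2_set by (intro cSup_upper[OF _ opnorm_bdd_above[OF S]]) blast
  moreover have "cmod (\<Sum>j\<in>S. A i j * v j) = s * cmod (\<Sum>j\<in>S. A i j * u j)" for i
  proof -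
    have "(\<Sum>j\<in>S. A i j * u j) = of_real (inverse s) * (\<Sum>j\<in>S. A i j * v j)"
      by (simp add: u_def sum_distrib_left mult_ac)
    then show ?thesis using s by (simp add: norm_mult norm_inverse)
  qed
  then have "L2_set (\<lambda>i. cmod (\<Sum>j\<in>S. A i j * v j)) S
      = s * L2_set (\<lambda>i. cmod (\<Sum>j\<in>S. A i j * u j)) S"
    using s by (simp add: L2_set_right_distrib)
  ultimately show ?thesis using s by (simp add: s_def mult.commute)
qed

lemma norm_mat_mult_on_le_opnorm:
  assumes I: "finite I"
  shows "cmod (mat_mult_on I (mat_mult_on I U Y) V a c)
    \<le> L2_set (\<lambda>x. cmod (U a x)) I * opnorm I Y * L2_set (\<lambda>y. cmod (V y c)) I"
proof -
  have "cmod (mat_mult_on I (mat_mult_on I U Y) V a c)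
      \<le> (\<Sum>x\<in>I. \<bar>cmod (U a x)\<bar> * \<bar>cmod (mat_mult_on I Y V x c)\<bar>)"
    unfolding mat_mult_on_assoc by (simp add: mat_mult_on_def[of I U] norm_sum norm_mult
        order.trans[OF norm_sum])
  also have "\<dots> \<le> L2_set (\<lambda>x. cmod (U a x)) I * L2_set (\<lambda>x. cmod (mat_mult_on I Y V x c)) I"
    by (rule L2_set_mult_ineq)
  also have "\<dots> \<le> L2_set (\<lambda>x. cmod (U a x)) I * (opnorm I Y * L2_set (\<lambda>y. cmod (V y c)) I)"
    unfolding mat_mult_on_def by (intro mult_left_mono L2_set_mat_vec_le_opnorm[OF I]) simp
  finally show ?thesis by (simp add: mult.assoc)
qed

section \<open>Anisotropic forms and the Schur complement\<close>

definition anisotropic_on :: "nat set \<Rightarrow> (nat \<Rightarrow> nat \<Rightarrow> complex) \<Rightarrow> bool" where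
  "anisotropic_on S M \<longleftrightarrow>
     (\<forall>w. (\<Sum>c\<in>S. cnj (w c) * (\<Sum>a\<in>S. M c a * w a)) = 0 \<longrightarrow> (\<forall>c\<in>S. w c = 0))"

lemma anisotropic_on_imp_mat_inj_on: "anisotropic_on S M \<Longrightarrow> mat_inj_on S M"
  unfolding anisotropic_on_def mat_inj_on_def by simp

lemma anisotropic_on_inverse_block_inj:
  assumes S: "finite S" and I: "I \<subseteq> S" and M: "anisotropic_on S M" and MG: "right_inverse_on S M G"
  shows "mat_inj_on I G"
  unfolding mat_inj_on_def
proof (intro allI impI)
  fix u assume Gu: "\<forall>i\<in>I. (\<Sum>j\<in>I. G i j * u j) = 0"
  \<comment> \<open>w = G u vanishes on I while M w = u lives on I, so the form vanishes at w.\<close>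
  define U :: "nat \<Rightarrow> nat \<Rightarrow> complex" where "U b c = (if b \<in> I then u b else 0)" for b c
  define w where "w a = mat_mult_on S G U a 0" for a
  have w_I: "w a = 0" if "a \<in> I" for a
  proof -
    have "w a = (\<Sum>b\<in>I. G a b * u b)"
      unfolding w_def mat_mult_on_def U_def using S I by (intro sum.mono_neutral_cong_right) auto
    with Gu that show ?thesis by simp
  qed
  have Mw: "(\<Sum>a\<in>S. M c a * w a) = U c 0" if "c \<in> S" for c
  proof -
    have "(\<Sum>a\<in>S. M c a * w a) = mat_mult_on S (mat_mult_on S M G) U c 0"
      by (simp add: w_def mat_mult_on_assoc mat_mult_on_def)
    also have "\<dots> = mat_mult_on S (\<lambda>a c. of_bool (a = c)) U c 0"
      using MG that by (intro mat_mult_on_cong) (auto simp: right_inverse_on_def)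
    also have "\<dots> = U c 0" by (rule mat_mult_on_id_left[OF S that])
    finally show ?thesis .
  qed
  have "(\<Sum>c\<in>S. cnj (w c) * (\<Sum>a\<in>S. M c a * w a)) = 0"
    using Mw w_I by (intro sum.neutral) (auto simp: U_def)
  then have "\<forall>c\<in>S. w c = 0" using M by (simp add: anisotropic_on_def)
  then show "\<forall>j\<in>I. u j = 0" using Mw I by (force simp: U_def)
qed

lemma Im_quadratic_form_shift:
  fixes Hr :: "nat \<Rightarrow> nat \<Rightarrow> real"
  assumes S: "finite S" and sym: "\<forall>a\<in>S. \<forall>b\<in>S. Hr a b = Hr b a"
  shows "Im (\<Sum>c\<in>S. cnj (w c) * (\<Sum>a\<in>S. (of_real (Hr c a) - (if c = a then z else 0)) * w a))
    = - Im z * (\<Sum>c\<in>S. (cmod (w c))\<^sup>2)"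
proof -
  define P where "P = (\<Sum>c\<in>S. \<Sum>a\<in>S. cnj (w c) * of_real (Hr c a) * w a)"
  have inner: "(\<Sum>a\<in>S. (of_real (Hr c a) - (if c = a then z else 0)) * w a)
      = (\<Sum>a\<in>S. of_real (Hr c a) * w a) - z * w c" if "c \<in> S" for c
    using S that by (simp add: left_diff_distrib sum_subtractf if_distrib[of "\<lambda>x. x * _"]
        cong: if_cong)
  have "(\<Sum>c\<in>S. cnj (w c) * (\<Sum>a\<in>S. (of_real (Hr c a) - (if c = a then z else 0)) * w a))
      = (\<Sum>c\<in>S. cnj (w c) * (\<Sum>a\<in>S. of_real (Hr c a) * w a) - z * (cnj (w c) * w c))"
    by (intro sum.cong refl) (simp add: inner right_diff_distrib mult.left_commute)
  also have "\<dots> = P - z * (\<Sum>c\<in>S. cnj (w c) * w c)"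
    by (simp add: P_def sum_subtractf sum_distrib_left mult.assoc)
  moreover have "cnj P = P"
  proof -
    have "cnj P = (\<Sum>c\<in>S. \<Sum>a\<in>S. w c * of_real (Hr c a) * cnj (w a))"
      by (simp add: P_def)
    also have "\<dots> = (\<Sum>a\<in>S. \<Sum>c\<in>S. w c * of_real (Hr c a) * cnj (w a))"
      by (rule sum.swap)
    also have "\<dots> = P"
      unfolding P_def using sym by (intro sum.cong refl) (auto simp: mult_ac)
    finally show ?thesis .
  qed
  then have "Im P = 0" by (metis cnj.sel(2) neg_equal_zero)
  moreover have "(\<Sum>c\<in>S. cnj (w c) * w c) = of_real (\<Sum>c\<in>S. (cmod (w c))\<^sup>2)"
    unfolding of_real_sum complex_norm_square by (simp add: mult.commute)
  ultimately show ?thesis by simp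
qed

lemma anisotropic_on_shift:
  fixes Hr :: "nat \<Rightarrow> nat \<Rightarrow> real"
  assumes S: "finite S" and sym: "\<forall>a\<in>S. \<forall>b\<in>S. Hr a b = Hr b a" and z: "Im z \<noteq> 0"
  shows "anisotropic_on S (\<lambda>c a. of_real (Hr c a) - (if c = a then z else 0))"
  unfolding anisotropic_on_def
proof (intro allI impI)
  fix w assume "(\<Sum>c\<in>S. cnj (w c) * (\<Sum>a\<in>S. (of_real (Hr c a) - (if c = a then z else 0)) * w a)) = 0"
  with Im_quadratic_form_shift[OF S sym, of w z] z have "(\<Sum>c\<in>S. (cmod (w c))\<^sup>2) = 0" by simp
  with S show "\<forall>c\<in>S. w c = 0" by (simp add: sum_nonneg_eq_0_iff)
qed

lemma schur_complement_right_inverse_on: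
  fixes M G Y :: "nat \<Rightarrow> nat \<Rightarrow> 'a::comm_ring_1"
  assumes S: "finite S" and I: "I \<subseteq> S"
    and MG: "right_inverse_on S M G" and GY: "right_inverse_on I G Y"
  shows "right_inverse_on (S - I) M (\<lambda>a c. G a c - mat_mult_on I (mat_mult_on I G Y) G a c)"
  unfolding right_inverse_on_def
proof (intro ballI)
  fix a c assume a: "a \<in> S - I" and c: "c \<in> S - I"
  have finI: "finite I" using S I finite_subset by blast
  \<comment> \<open>The (T, I) block of M G = 1 reads M_TT G_TI = - M_TI G_II.\<close>
  have MG_T: "mat_mult_on (S - I) M G a x = - mat_mult_on I M G a x" if "x \<in> I" for x
  proof -
    have "mat_mult_on S M G a x = 0"
      using MG a I that by (auto simp: right_inverse_on_def)
    then show ?thesis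
      using mat_mult_on_split[OF S I, of M G a x] by (simp add: eq_neg_iff_add_eq_0)
  qed
  have MGY_T: "mat_mult_on I (mat_mult_on (S - I) M G) Y a y = - M a y" if y: "y \<in> I" for y
  proof -
    have "mat_mult_on I (mat_mult_on (S - I) M G) Y a y = - mat_mult_on I (mat_mult_on I M G) Y a y"
      using MG_T by (simp add: mat_mult_on_def sum_negf)
    also have "\<dots> = - mat_mult_on I M (mat_mult_on I G Y) a y"
      by (simp add: mat_mult_on_assoc)
    also have "\<dots> = - mat_mult_on I M (\<lambda>a c. of_bool (a = c)) a y"
      using GY y by (simp add: right_inverse_on_def cong: mat_mult_on_cong)
    also have "\<dots> = - M a y" by (simp add: mat_mult_on_id_right[OF finI y])
    finally show ?thesis .
  qed
  have "mat_mult_on (S - I) M (mat_mult_on I (mat_mult_on I G Y) G) a c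
      = mat_mult_on I (mat_mult_on I (mat_mult_on (S - I) M G) Y) G a c"
    by (simp add: mat_mult_on_assoc)
  also have "\<dots> = - mat_mult_on I M G a c"
    using MGY_T by (simp add: mat_mult_on_def sum_negf)
  finally have "mat_mult_on (S - I) M (\<lambda>a c. G a c - mat_mult_on I (mat_mult_on I G Y) G a c) a c
      = mat_mult_on (S - I) M G a c + mat_mult_on I M G a c"
    by (simp add: mat_mult_on_def right_diff_distrib sum_subtractf)
  also have "\<dots> = of_bool (a = c)"
    using mat_mult_on_split[OF S I, of M G a c] MG a c by (simp add: right_inverse_on_def)
  finally show "mat_mult_on (S - I) M (\<lambda>a c. G a c - mat_mult_on I (mat_mult_on I G Y) G a c) a c
      = of_bool (a = c)" .
qed

section \<open>Resolvents of minors\<close>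

definition shifted_minor :: "(nat \<Rightarrow> nat \<Rightarrow> real) \<Rightarrow> complex \<Rightarrow> nat set \<Rightarrow> nat \<Rightarrow> nat \<Rightarrow> complex" where
  "shifted_minor H z T a b = of_real (minor H T a b) - (if a = b then z else 0)"

lemma resolv_eq_minv_shifted_minor: "resolv N H z T = minv {1..N} (shifted_minor H z T)"
  unfolding resolv_def shifted_minor_def ..

lemma shifted_minor_eq:
  "a \<notin> T \<Longrightarrow> b \<notin> T \<Longrightarrow> shifted_minor H z T a b = of_real (H a b) - (if a = b then z else 0)"
  "a \<in> T \<Longrightarrow> b \<notin> T \<Longrightarrow> shifted_minor H z T a b = 0"
  by (auto simp: shifted_minor_def minor_def)

context
  fixes N :: nat and H :: "nat \<Rightarrow> nat \<Rightarrow> real" and z :: complex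
  assumes sym: "\<forall>a\<in>{1..N}. \<forall>b\<in>{1..N}. H a b = H b a" and z: "Im z \<noteq> 0"
begin

lemma anisotropic_on_shifted_minor: "anisotropic_on {1..N} (shifted_minor H z T)"
proof -
  have "\<forall>a\<in>{1..N}. \<forall>b\<in>{1..N}. minor H T a b = minor H T b a"
    using sym by (simp add: minor_def)
  from anisotropic_on_shift[OF _ this z] show ?thesis
    unfolding shifted_minor_def by simp
qed

lemma resolv_right_inverse_on:
  "right_inverse_on {1..N} (shifted_minor H z T) (resolv N H z T)"
  "right_inverse_on {1..N} (resolv N H z T) (shifted_minor H z T)"
  using minv_right_inverse_on[OF _ anisotropic_on_imp_mat_inj_on[OF anisotropic_on_shifted_minor]]
  by (simp_all add: resolv_eq_minv_shifted_minor)

lemma resolv_block_inj: "I \<subseteq> {1..N} \<Longrightarrow> mat_inj_on I (resolv N H z T)"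
  by (rule anisotropic_on_inverse_block_inj[OF _ _ anisotropic_on_shifted_minor
        resolv_right_inverse_on(1)]) simp

lemma resolv_minor_schur:
  assumes I: "I \<subseteq> {1..N}" and k: "k \<in> {1..N} - I" and l: "l \<in> {1..N} - I"
  shows "resolv N H z I k l = resolv N H z {} k l
    - mat_mult_on I (mat_mult_on I (resolv N H z {}) (minv I (resolv N H z {}))) (resolv N H z {}) k l"
proof -
  let ?S = "{1..N}" and ?G = "resolv N H z {}"
  have finI: "finite I" using I finite_subset by blast
  \<comment> \<open>H^(I) - z has no entries coupling I with its complement, so there G^(I) inverts (H - z)_TT.\<close>
  have left: "right_inverse_on (?S - I) (resolv N H z I) (shifted_minor H z {})"
    unfolding right_inverse_on_def
  proof (intro ballI)
    fix a c assume a: "a \<in> ?S - I" and c: "c \<in> ?S - I"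
    have "of_bool (a = c) = mat_mult_on ?S (resolv N H z I) (shifted_minor H z I) a c"
      using resolv_right_inverse_on(2)[of I] a c by (simp add: right_inverse_on_def)
    also have "\<dots> = mat_mult_on (?S - I) (resolv N H z I) (shifted_minor H z I) a c
        + mat_mult_on I (resolv N H z I) (shifted_minor H z I) a c"
      by (rule mat_mult_on_split[OF _ I]) simp
    also have "mat_mult_on I (resolv N H z I) (shifted_minor H z I) a c = 0"
      using c by (simp add: mat_mult_on_def shifted_minor_eq)
    finally show "mat_mult_on (?S - I) (resolv N H z I) (shifted_minor H z {}) a c = of_bool (a = c)"
      using c by (simp add: mat_mult_on_def shifted_minor_eq)
  qed
  have right: "right_inverse_on (?S - I) (shifted_minor H z {})
      (\<lambda>a c. ?G a c - mat_mult_on I (mat_mult_on I ?G (minv I ?G)) ?G a c)"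
    by (rule schur_complement_right_inverse_on[OF finite_atLeastAtMost I resolv_right_inverse_on(1)
          minv_right_inverse_on(1)[OF finI resolv_block_inj[OF I]]])
  show ?thesis
    using right_inverse_on_unique[OF _ left right k l] by simp
qed

lemma norm_resolv_minor_le:
  assumes I: "I \<subseteq> {1..N}" and k: "k \<in> {1..N} - I" and l: "l \<in> {1..N} - I"
    and entries: "\<forall>a\<in>{1..N}. \<forall>b\<in>{1..N}. cmod (resolv N H z {} a b) \<le> g"
    and opnorm: "opnorm I (minv I (resolv N H z {})) \<le> c"
  shows "cmod (resolv N H z I k l) \<le> g + real (card I) * g\<^sup>2 * c"
proof -
  let ?G = "resolv N H z {}"
  have finI: "finite I" using I finite_subset by blast
  have g: "0 \<le> g" using entries k l by (meson DiffD1 norm_ge_zero order_trans)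
  have row: "L2_set (\<lambda>x. cmod (?G k x)) I \<le> sqrt (card I) * g"
    and col: "L2_set (\<lambda>y. cmod (?G y l)) I \<le> sqrt (card I) * g"
    using L2_set_mono[of I _ "\<lambda>_. g"] entries k l I g by (auto simp: L2_set_constant subset_iff)
  have "cmod (resolv N H z I k l)
      \<le> cmod (?G k l) + cmod (mat_mult_on I (mat_mult_on I ?G (minv I ?G)) ?G k l)"
    unfolding resolv_minor_schur[OF I k l] by (rule norm_triangle_ineq4)
  also have "\<dots> \<le> g + (sqrt (card I) * g) * c * (sqrt (card I) * g)"
  proof (rule add_mono)
    show "cmod (?G k l) \<le> g" using entries k l by simp
    have "cmod (mat_mult_on I (mat_mult_on I ?G (minv I ?G)) ?G k l)
        \<le> L2_set (\<lambda>x. cmod (?G k x)) I * opnorm I (minv I ?G) * L2_set (\<lambda>y. cmod (?G y l)) I"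
      by (rule norm_mat_mult_on_le_opnorm[OF finI])
    also have "\<dots> \<le> (sqrt (card I) * g) * c * (sqrt (card I) * g)"
      using row col opnorm opnorm_nonneg[OF finI] g order_trans[OF opnorm_nonneg[OF finI] opnorm]
      by (intro mult_mono) auto
    finally show "cmod (mat_mult_on I (mat_mult_on I ?G (minv I ?G)) ?G k l)
        \<le> (sqrt (card I) * g) * c * (sqrt (card I) * g)" .
  qed
  also have "\<dots> = g + real (card I) * g\<^sup>2 * c"
    by (simp add: power2_eq_square algebra_simps)
  finally show ?thesis .
qed

end

lemma norm_resolv_le_Gamma_ctrl:
  assumes "a \<in> {1..N}" "b \<in> {1..N}"
  shows "cmod (resolv N H z {} a b) \<le> Gamma_ctrl N H z"
proof -
  have "finite {cmod (resolv N H z {} i j) | i j. i \<in> {1..N} \<and> j \<in> {1..N}}"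
    by (rule finite_image_set2) auto
  then show ?thesis
    unfolding Gamma_ctrl_def using assms by (intro max.coboundedI2 Max_ge) auto
qed

lemma window_subset: "window N K i \<subseteq> {1..N}"
  by (auto simp: window_def)

lemma card_window_le: "card (window N K i) \<le> 4 * K + 1"
proof -
  have "card (window N K i) \<le> card {i - 2 * K .. i + 2 * K}"
    by (intro card_mono) (auto simp: window_def)
  then show ?thesis by simp
qed

lemma opnorm_minv_resolv_le_gamma_ctrl:
  assumes "i \<in> {1..N}" "I \<subseteq> window N K i" "J \<subseteq> window N K i" "I \<inter> J = {}"
  shows "opnorm I (minv I (resolv N H z J)) \<le> gamma_ctrl N K H z"
proof -
  let ?A = "{opnorm I (minv I (resolv N H z J)) | i I J.
       i \<in> {1..N} \<and> I \<subseteq> window N K i \<and> J \<subseteq> window N K i \<and> I \<inter> J = {}}"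
  have "?A \<subseteq> (\<lambda>(I, J). opnorm I (minv I (resolv N H z J))) ` (Pow {1..N} \<times> Pow {1..N})"
    using window_subset by fastforce
  then have "finite ?A" by (rule finite_subset) simp
  then show ?thesis
    unfolding gamma_ctrl_def using assms by (intro max.coboundedI2 cSup_upper) auto
qed

lemma control_bound_arith:
  fixes g c :: real and n K :: nat
  assumes g: "1 \<le> g" and c: "1 \<le> c" and n: "n \<le> 4 * K + 1" and K: "1 \<le> K"
  shows "g + real n * g\<^sup>2 * c \<le> 8 * (real K)\<^sup>2 * g\<^sup>2 * c"
proof -
  have K2: "4 * real K + 2 \<le> 8 * (real K)\<^sup>2"
  proof -
    have "1 \<le> real K" using K by simp
    moreover from this have "real K * 1 \<le> real K * real K" by (intro mult_left_mono) auto
    ultimately show ?thesis unfolding power2_eq_square by linarith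
  qed
  have "g \<le> g\<^sup>2 * c"
    using g c mult_mono[OF g c] by (simp add: power2_eq_square mult_le_cancel_left1 mult.assoc)
  moreover have "real n * (g\<^sup>2 * c) \<le> (4 * real K + 1) * (g\<^sup>2 * c)"
    using n g c by (intro mult_right_mono) auto
  moreover have "(4 * real K + 2) * (g\<^sup>2 * c) \<le> 8 * (real K)\<^sup>2 * (g\<^sup>2 * c)"
    using K2 g c by (intro mult_right_mono) auto
  ultimately show ?thesis by (simp add: algebra_simps)
qed

theorem corollary3p2:
  fixes N K :: nat and H :: "nat \<Rightarrow> nat \<Rightarrow> real" and z :: complex
    and i k l :: nat and I :: "nat set"
  assumes "K \<ge> 1"
    and "\<forall>a\<in>{1..N}. \<forall>b\<in>{1..N}. H a b = H b a"
    and "Im z > 0"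
    and "i \<in> {1..N}"
    and "I \<subseteq> window N K i"
    and "k \<in> {1..N}" and "l \<in> {1..N}" and "k \<notin> I" and "l \<notin> I"
  shows "cmod (resolv N H z I k l) \<le> 8 * (real K)\<^sup>2 * (Gamma_ctrl N H z)\<^sup>2 * gamma_ctrl N K H z"
proof -
  have I: "I \<subseteq> {1..N}" using assms(5) window_subset by blast
  have card: "card I \<le> 4 * K + 1"
    using card_mono[OF finite_subset[OF window_subset] assms(5)] card_window_le[of N K i] by simp
  have "cmod (resolv N H z I k l)
      \<le> Gamma_ctrl N H z + real (card I) * (Gamma_ctrl N H z)\<^sup>2 * gamma_ctrl N K H z"
    using assms norm_resolv_le_Gamma_ctrl opnorm_minv_resolv_le_gamma_ctrl[of i N I K "{}"]
    by (intro norm_resolv_minor_le[OF assms(2) _ I]) auto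
  also have "\<dots> \<le> 8 * (real K)\<^sup>2 * (Gamma_ctrl N H z)\<^sup>2 * gamma_ctrl N K H z"
    by (rule control_bound_arith[OF _ _ card assms(1)]) (simp_all add: Gamma_ctrl_def gamma_ctrl_def)
  finally show ?thesis .
qed

end
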